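(* For all positive integers $n$ and $k$ with $n\ge k$, $\log\log(d_n+1) \le n+\log\log(d_k+1)-k$.
   Context: All logarithms $\log$ are to base $2$. A delta-matroid $(E,\mathcal F)$ consists of a finite ground set $E$ and a non-empty collection $\mathcal F$ of subsets of $E$ (the feasible sets) satisfying the symmetric exchange axiom: for all $X,Y\in\mathcal F$ and every $e\in X\triangle Y$ there exists $f\in X\triangle Y$ (possibly $f=e$) with $X\triangle\{e,f\}\in\mathcal F$. Let $d_n$ denote the number of labelled delta-matroids with ground set $[n]=\{1,\dots,n\}$, i.e. the number of collections $\mathcal F$ of subsets of $[n]$ such that $([n],\mathcal F)$ is a delta-matroid. *)

theory Defs
  imports Complex_Main
begin

definition symdiff :: "'a set \<Rightarrow> 'a set \<Rightarrow> 'a set" where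
  "symdiff X Y = (X - Y) \<union> (Y - X)"

definition delta_matroid :: "'a set \<Rightarrow> 'a set set \<Rightarrow> bool" where
  "delta_matroid E F \<longleftrightarrow> finite E \<and> F \<noteq> {} \<and> (\<forall>X\<in>F. X \<subseteq> E) \<and>
     (\<forall>X\<in>F. \<forall>Y\<in>F. \<forall>e\<in>symdiff X Y. \<exists>f\<in>symdiff X Y. symdiff X {e, f} \<in> F)"

definition num_delta_matroids :: "nat \<Rightarrow> nat" where
  "num_delta_matroids n = card {F. F \<subseteq> Pow {1..n} \<and> delta_matroid {1..n} F}"

end

theory Submission
  imports Defs
begin

text \<open>Splitting a delta-matroid at an element e into its members avoiding e and its members
containing e (with e removed) gives two families that are each empty or again delta-matroids
on the ground set without e, and the pair determines the original. Hence
d_(n+1) + 1 \<le> (d_n + 1)^2, so log log (d_n + 1) - n is non-increasing.\<close>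

definition delta_matroids :: "'a set \<Rightarrow> 'a set set set" where
  "delta_matroids E = {F. delta_matroid E F}"

definition deletion :: "'a \<Rightarrow> 'a set set \<Rightarrow> 'a set set" where
  "deletion e F = {X \<in> F. e \<notin> X}"

definition contraction :: "'a \<Rightarrow> 'a set set \<Rightarrow> 'a set set" where
  "contraction e F = (\<lambda>X. X - {e}) ` {X \<in> F. e \<in> X}"

lemma num_delta_matroids_eq: "num_delta_matroids n = card (delta_matroids {1..n})"
proof -
  have "{F. F \<subseteq> Pow {1..n} \<and> delta_matroid {1..n} F} = {F. delta_matroid {1..n} F}"
    unfolding delta_matroid_def by blast
  then show ?thesis unfolding num_delta_matroids_def delta_matroids_def by simp
qed

lemma finite_delta_matroids: "finite (delta_matroids E)"
proof (cases "finite E")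
  case True
  have "delta_matroids E \<subseteq> Pow (Pow E)"
    unfolding delta_matroids_def delta_matroid_def by auto
  with True show ?thesis by (simp add: finite_subset)
next
  case False
  then show ?thesis unfolding delta_matroids_def delta_matroid_def by simp
qed

lemma empty_notin_delta_matroids: "{} \<notin> delta_matroids E"
  unfolding delta_matroids_def delta_matroid_def by simp

lemma singleton_empty_in_delta_matroids:
  assumes "finite E"
  shows "{{}} \<in> delta_matroids E"
  using assms unfolding delta_matroids_def delta_matroid_def symdiff_def by auto

lemma delta_matroid_deletion:
  assumes dm: "delta_matroid E F" and nonempty: "deletion e F \<noteq> {}"
  shows "delta_matroid (E - {e}) (deletion e F)"
  unfolding delta_matroid_def
proof (intro conjI ballI)
  show "finite (E - {e})" using dm unfolding delta_matroid_def by simp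
  show "deletion e F \<noteq> {}" by fact
next
  fix X assume "X \<in> deletion e F"
  then show "X \<subseteq> E - {e}" using dm unfolding deletion_def delta_matroid_def by auto
next
  fix X Y a assume X: "X \<in> deletion e F" and Y: "Y \<in> deletion e F" and a: "a \<in> symdiff X Y"
  from dm X Y a obtain b where b: "b \<in> symdiff X Y" "symdiff X {a, b} \<in> F"
    unfolding delta_matroid_def deletion_def by blast
  have "e \<notin> symdiff X Y" using X Y unfolding deletion_def symdiff_def by auto
  then have "e \<notin> symdiff X {a, b}" using X a b unfolding deletion_def symdiff_def by auto
  with b show "\<exists>b\<in>symdiff X Y. symdiff X {a, b} \<in> deletion e F"
    unfolding deletion_def by blast
qed

lemma delta_matroid_contraction:
  assumes dm: "delta_matroid E F" and nonempty: "contraction e F \<noteq> {}"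
  shows "delta_matroid (E - {e}) (contraction e F)"
  unfolding delta_matroid_def
proof (intro conjI ballI)
  show "finite (E - {e})" using dm unfolding delta_matroid_def by simp
  show "contraction e F \<noteq> {}" by fact
next
  fix X assume "X \<in> contraction e F"
  then show "X \<subseteq> E - {e}" using dm unfolding contraction_def delta_matroid_def by auto
next
  fix X' Y' a assume X': "X' \<in> contraction e F" and Y': "Y' \<in> contraction e F"
    and a: "a \<in> symdiff X' Y'"
  from X' obtain X where X: "X \<in> F" "e \<in> X" "X' = X - {e}" unfolding contraction_def by auto
  from Y' obtain Y where Y: "Y \<in> F" "e \<in> Y" "Y' = Y - {e}" unfolding contraction_def by auto
  have sd: "symdiff X' Y' = symdiff X Y" using X Y unfolding symdiff_def by auto
  from dm X Y a sd obtain b where b: "b \<in> symdiff X Y" "symdiff X {a, b} \<in> F"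
    unfolding delta_matroid_def by metis
  have "e \<notin> symdiff X Y" using X Y unfolding symdiff_def by auto
  then have "e \<in> symdiff X {a, b}" and "symdiff X' {a, b} = symdiff X {a, b} - {e}"
    using X a b sd unfolding symdiff_def by auto
  with b sd show "\<exists>b\<in>symdiff X' Y'. symdiff X' {a, b} \<in> contraction e F"
    unfolding contraction_def by auto
qed

lemma deletion_Un_contraction: "F = deletion e F \<union> insert e ` contraction e F"
proof -
  have "\<And>X. X \<in> F \<Longrightarrow> e \<in> X \<Longrightarrow> insert e (X - {e}) = X" by auto
  then show ?thesis unfolding deletion_def contraction_def by (auto simp: image_image)
qed

lemma card_delta_matroids_le_square:
  "card (delta_matroids E) + 1 \<le> (card (delta_matroids (E - {e})) + 1)\<^sup>2"
proof -
  define split where "split F = (deletion e F, contraction e F)" for F :: "'a set set"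
  define S where "S = insert {} (delta_matroids (E - {e}))"
  have inj: "inj_on split (delta_matroids E)"
  proof (rule inj_onI)
    fix F G assume "split F = split G"
    then have "deletion e F = deletion e G" "contraction e F = contraction e G"
      unfolding split_def by simp_all
    then show "F = G"
      using deletion_Un_contraction[of F e] deletion_Un_contraction[of G e] by argo
  qed
  have image: "split ` delta_matroids E \<subseteq> S \<times> S - {({}, {})}"
  proof
    fix p assume "p \<in> split ` delta_matroids E"
    then obtain F where F: "delta_matroid E F" "p = split F"
      unfolding delta_matroids_def by auto
    have "F \<noteq> {}" using F(1) unfolding delta_matroid_def by simp
    then have "p \<noteq> ({}, {})" using F(2) deletion_Un_contraction[of F e]
      unfolding split_def by auto
    then show "p \<in> S \<times> S - {({}, {})}"
      using F delta_matroid_deletion[of E F e] delta_matroid_contraction[of E F e]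
      unfolding split_def S_def delta_matroids_def by auto
  qed
  have "finite S" unfolding S_def using finite_delta_matroids by simp
  have "card (delta_matroids E) = card (split ` delta_matroids E)"
    using inj by (rule card_image[symmetric])
  also have "\<dots> \<le> card (S \<times> S - {({}, {})})"
    using image \<open>finite S\<close> by (intro card_mono) auto
  also have "\<dots> = card S * card S - 1"
  proof -
    have "({}, {}) \<in> S \<times> S" unfolding S_def by simp
    with \<open>finite S\<close> show ?thesis by (simp add: card_Diff_singleton card_cartesian_product)
  qed
  finally have "card (delta_matroids E) \<le> card S * card S - 1" .
  moreover have "card S = card (delta_matroids (E - {e})) + 1"
    unfolding S_def by (simp add: finite_delta_matroids empty_notin_delta_matroids)
  ultimately show ?thesis by (simp add: power2_eq_square)
qed

lemma log_log_minus_antimono: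
  fixes a :: "nat \<Rightarrow> real"
  assumes gt1: "\<And>m. 1 < a m" and sq: "\<And>m. a (Suc m) \<le> (a m)\<^sup>2" and "k \<le> n"
  shows "log 2 (log 2 (a n)) - n \<le> log 2 (log 2 (a k)) - k"
proof -
  have "log 2 (log 2 (a (Suc m))) \<le> log 2 (log 2 (a m)) + 1" for m
  proof -
    have "0 < a m" "0 < log 2 (a m)" "0 < log 2 (a (Suc m))"
      using gt1[of m] gt1[of "Suc m"] by auto
    have "log 2 (a (Suc m)) \<le> log 2 ((a m)\<^sup>2)"
      using gt1[of "Suc m"] sq[of m] \<open>0 < a m\<close> by (subst log_le_cancel_iff) auto
    also have "\<dots> = 2 * log 2 (a m)"
      using \<open>0 < a m\<close> by (simp add: log_nat_power)
    finally have "log 2 (log 2 (a (Suc m))) \<le> log 2 (2 * log 2 (a m))"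
      using \<open>0 < log 2 (a (Suc m))\<close> by (simp add: log_le_cancel_iff)
    also have "\<dots> = log 2 (log 2 (a m)) + 1"
      using \<open>0 < log 2 (a m)\<close> by (simp add: log_mult_pos)
    finally show ?thesis .
  qed
  then have "decseq (\<lambda>m. log 2 (log 2 (a m)) - m)"
    by (intro decseq_SucI) (simp add: algebra_simps)
  from decseqD[OF this \<open>k \<le> n\<close>] show ?thesis .
qed

theorem corollary3p6:
  fixes n k :: nat
  assumes "1 \<le> k" and "k \<le> n"
  shows "log 2 (log 2 (real (num_delta_matroids n) + 1))
           \<le> real n + log 2 (log 2 (real (num_delta_matroids k) + 1)) - real k"
proof -
  define a where "a m = real (num_delta_matroids m) + 1" for m
  have "1 < a m" for m
  proof -
    have "0 < card (delta_matroids {1..m})"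
      using singleton_empty_in_delta_matroids[of "{1..m}"] finite_delta_matroids
      by (auto simp: card_gt_0_iff)
    then show ?thesis unfolding a_def num_delta_matroids_eq by simp
  qed
  moreover have "a (Suc m) \<le> (a m)\<^sup>2" for m
  proof -
    have "{1..Suc m} - {Suc m} = {1..m}" by auto
    then have "num_delta_matroids (Suc m) + 1 \<le> (num_delta_matroids m + 1)\<^sup>2"
      using card_delta_matroids_le_square[of "{1..Suc m}" "Suc m"]
      by (simp add: num_delta_matroids_eq)
    then have "real (num_delta_matroids (Suc m) + 1) \<le> real ((num_delta_matroids m + 1)\<^sup>2)"
      by (simp only: of_nat_le_iff)
    then show ?thesis unfolding a_def by (simp add: add.commute)
  qed
  ultimately have "log 2 (log 2 (a n)) - n \<le> log 2 (log 2 (a k)) - k"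
    using \<open>k \<le> n\<close> by (rule log_log_minus_antimono)
  then show ?thesis unfolding a_def by linarith
qed

end
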